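(* Let $A\in\mathbb{C}^{n\times n}$ be Hermitian, $\beta>0$, $f(\mathbf{z})=\frac12\mathbf{z}^*A\mathbf{z}+\frac{\beta}{2}\sum_k|z_k|^4$, and let $\mathbf{z}\in\mathbb{CS}^{n-1}$ be a stationary point of $\min_{\mathbf{z}\in\mathbb{CS}^{n-1}}f(\mathbf{z})$. Then $\mathbf{z}$ is a global minimizer of $f$ on $\mathbb{CS}^{n-1}$ if and only if (i) $H_f(\mathbf{z})[\mathbf{v}]\ge0$ and $2H_3(\mathbf{v})^2\le H_f(\mathbf{z})[\mathbf{v}]\cdot[f(\mathbf{v})-f(\mathbf{z})]$ for all $\mathbf{v}\in\mathcal{T}_{\mathbf{z}}\cap\mathbb{CS}^{n-1}$, and (ii) $H_3(\mathbf{v})=0$ and $H_4(\mathbf{v})\ge0$ for all $\mathbf{v}\in\mathcal{T}_{\mathbf{z}}\cap\mathbb{CS}^{n-1}$ with $H_f(\mathbf{z})[\mathbf{v}]=0$.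
   Context: $\mathbb{CS}^{n-1}$ is the unit sphere of $\mathbb{C}^n$. Stationarity means $[A+2\beta\,\mathrm{diag}(|\mathbf{z}|^2)]\mathbf{z}=2\lambda\mathbf{z}$ with $\lambda=\frac12\mathbf{z}^*A\mathbf{z}+\beta\|\mathbf{z}\|_4^4$, where $|\mathbf{z}|^2=(|z_1|^2,\dots,|z_n|^2)$. $\mathcal{T}_{\mathbf{z}}=\{\mathbf{v}\in\mathbb{C}^n:\mathrm{Re}(\mathbf{v}^*\mathbf{z})=0\}$. $H_f(\mathbf{z})[\mathbf{v}]=\mathbf{v}^*[A+2\beta\,\mathrm{diag}(|\mathbf{z}|^2)-2\lambda I]\mathbf{v}+4\beta\sum_k\mathrm{Re}(v_k\bar z_k)^2$, $H_3(\mathbf{v})=\beta\sum_k(|v_k|^2-|z_k|^2)\mathrm{Re}(\bar z_kv_k)$, $H_4(\mathbf{v})=\beta\sum_k[(|v_k|^2-|z_k|^2)^2-4\mathrm{Re}(\bar z_kv_k)^2]$. *)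

theory Defs
  imports "HOL-Analysis.Analysis"
begin

definition hermitian :: "complex ^ 'n ^ 'n \<Rightarrow> bool" where
  "hermitian A \<longleftrightarrow> (\<forall>i j. A $ i $ j = cnj (A $ j $ i))"

definition qform :: "complex ^ 'n ^ 'n \<Rightarrow> complex ^ 'n \<Rightarrow> complex ^ 'n \<Rightarrow> complex" where
  "qform M v w = (\<Sum>i\<in>UNIV. \<Sum>j\<in>UNIV. cnj (v $ i) * M $ i $ j * w $ j)"

definition cinner :: "complex ^ 'n \<Rightarrow> complex ^ 'n \<Rightarrow> complex" where
  "cinner v w = (\<Sum>k\<in>UNIV. cnj (v $ k) * w $ k)"

definition csphere :: "(complex ^ 'n) set" where
  "csphere = {z. (\<Sum>k\<in>UNIV. (cmod (z $ k))\<^sup>2) = 1}"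

definition norm4_4 :: "complex ^ 'n \<Rightarrow> real" where
  "norm4_4 z = (\<Sum>k\<in>UNIV. (cmod (z $ k)) ^ 4)"

text \<open>f(z) = 1/2 z^* A z + beta/2 sum |z_k|^4  (real-valued for Hermitian A).\<close>
definition fobj :: "complex ^ 'n ^ 'n \<Rightarrow> real \<Rightarrow> complex ^ 'n \<Rightarrow> real" where
  "fobj A \<beta> z = Re (qform A z z) / 2 + \<beta> / 2 * norm4_4 z"

definition lam :: "complex ^ 'n ^ 'n \<Rightarrow> real \<Rightarrow> complex ^ 'n \<Rightarrow> real" where
  "lam A \<beta> z = Re (qform A z z) / 2 + \<beta> * norm4_4 z"

definition Amod :: "complex ^ 'n ^ 'n \<Rightarrow> real \<Rightarrow> complex ^ 'n \<Rightarrow> complex ^ 'n ^ 'n" where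
  "Amod A \<beta> z = (\<chi> i j. A $ i $ j + (if i = j then of_real (2 * \<beta> * (cmod (z $ i))\<^sup>2) else 0))"

definition stationary :: "complex ^ 'n ^ 'n \<Rightarrow> real \<Rightarrow> complex ^ 'n \<Rightarrow> bool" where
  "stationary A \<beta> z \<longleftrightarrow> z \<in> csphere \<and>
     (\<forall>i. (\<Sum>j\<in>UNIV. Amod A \<beta> z $ i $ j * z $ j) = of_real (2 * lam A \<beta> z) * z $ i)"

definition tangent :: "complex ^ 'n \<Rightarrow> (complex ^ 'n) set" where
  "tangent z = {v. Re (cinner v z) = 0}"

definition Hf :: "complex ^ 'n ^ 'n \<Rightarrow> real \<Rightarrow> complex ^ 'n \<Rightarrow> complex ^ 'n \<Rightarrow> real" where
  "Hf A \<beta> z v = Re (qform (Amod A \<beta> z) v v) - 2 * lam A \<beta> z * (\<Sum>k\<in>UNIV. (cmod (v $ k))\<^sup>2)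
     + 4 * \<beta> * (\<Sum>k\<in>UNIV. (Re (v $ k * cnj (z $ k)))\<^sup>2)"

definition H3 :: "real \<Rightarrow> complex ^ 'n \<Rightarrow> complex ^ 'n \<Rightarrow> real" where
  "H3 \<beta> z v = \<beta> * (\<Sum>k\<in>UNIV. ((cmod (v $ k))\<^sup>2 - (cmod (z $ k))\<^sup>2) * Re (cnj (z $ k) * v $ k))"

definition H4 :: "real \<Rightarrow> complex ^ 'n \<Rightarrow> complex ^ 'n \<Rightarrow> real" where
  "H4 \<beta> z v = \<beta> * (\<Sum>k\<in>UNIV. ((cmod (v $ k))\<^sup>2 - (cmod (z $ k))\<^sup>2)\<^sup>2
                               - 4 * (Re (cnj (z $ k) * v $ k))\<^sup>2)"

definition global_min_on_sphere :: "complex ^ 'n ^ 'n \<Rightarrow> real \<Rightarrow> complex ^ 'n \<Rightarrow> bool" where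
  "global_min_on_sphere A \<beta> z \<longleftrightarrow> z \<in> csphere \<and> (\<forall>w\<in>csphere. fobj A \<beta> z \<le> fobj A \<beta> w)"

end

theory Submission
  imports Defs
begin

(*
  Every point of the sphere is c z + s v with c\<^sup>2 + s\<^sup>2 = 1 and v a unit tangent vector at z.
  For a stationary z the objective expands exactly along such great circles:
    f(c z + s v) - f(z) = s\<^sup>2/2 * q_v(c, s),
    q_v(c, s) = c\<^sup>2 H_f(z)[v] + 4 c s H_3(v) + 2 s\<^sup>2 (f(v) - f(z)),
  and moreover H_4(v) = 2 (f(v) - f(z)) - H_f(z)[v].  Hence z is a global minimizer iff every
  binary quadratic form q_v is positive semidefinite, and conditions (i) and (ii) are the
  determinant criterion for q_v.
*)

lemma binary_quadratic_form_nonneg_iff: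
  fixes a b e :: real
  shows "(\<forall>x y. 0 \<le> a * x\<^sup>2 + 2 * b * x * y + e * y\<^sup>2) \<longleftrightarrow> 0 \<le> a \<and> 0 \<le> e \<and> b\<^sup>2 \<le> a * e"
proof
  assume Q: "\<forall>x y. 0 \<le> a * x\<^sup>2 + 2 * b * x * y + e * y\<^sup>2"
  have a: "0 \<le> a" and e: "0 \<le> e" using Q [rule_format, of 1 0] Q [rule_format, of 0 1] by simp_all
  have "0 \<le> a * (a * e - b\<^sup>2)" "0 \<le> e * (a * e - b\<^sup>2)" "0 \<le> - 2 * b\<^sup>2 + a + e * b\<^sup>2"
    using Q [rule_format, of "-b" a] Q [rule_format, of e "-b"] Q [rule_format, of 1 "-b"]
    by (simp_all add: power2_eq_square algebra_simps)
  then have "b\<^sup>2 \<le> a * e"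
    using a e by (cases "a = 0 \<and> e = 0") (auto simp: zero_le_mult_iff)
  with a e show "0 \<le> a \<and> 0 \<le> e \<and> b\<^sup>2 \<le> a * e" by simp
next
  assume psd: "0 \<le> a \<and> 0 \<le> e \<and> b\<^sup>2 \<le> a * e"
  show "\<forall>x y. 0 \<le> a * x\<^sup>2 + 2 * b * x * y + e * y\<^sup>2"
  proof (intro allI)
    fix x y :: real
    show "0 \<le> a * x\<^sup>2 + 2 * b * x * y + e * y\<^sup>2"
    proof (cases "a = 0")
      case True
      with psd show ?thesis by simp
    next
      case False
      have "a * (a * x\<^sup>2 + 2 * b * x * y + e * y\<^sup>2) = (a * x + b * y)\<^sup>2 + (a * e - b\<^sup>2) * y\<^sup>2"
        by (simp add: power2_eq_square algebra_simps)
      also have "\<dots> \<ge> 0" using psd by simp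
      finally show ?thesis using psd False by (simp add: zero_le_mult_iff)
    qed
  qed
qed

lemma binary_quadratic_form_nonneg_on_circle_iff:
  fixes a b e :: real
  shows "(\<forall>x y. x\<^sup>2 + y\<^sup>2 = 1 \<longrightarrow> y \<noteq> 0 \<longrightarrow> 0 \<le> a * x\<^sup>2 + 2 * b * x * y + e * y\<^sup>2)
    \<longleftrightarrow> 0 \<le> a \<and> 0 \<le> e \<and> b\<^sup>2 \<le> a * e"
proof
  define Q where "Q x y = a * x\<^sup>2 + 2 * b * x * y + e * y\<^sup>2" for x y :: real
  assume circle: "\<forall>x y. x\<^sup>2 + y\<^sup>2 = 1 \<longrightarrow> y \<noteq> 0 \<longrightarrow> 0 \<le> a * x\<^sup>2 + 2 * b * x * y + e * y\<^sup>2"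
  have off_axis: "0 \<le> Q x y" if "y \<noteq> 0" for x y
  proof -
    define r where "r = sqrt (x\<^sup>2 + y\<^sup>2)"
    have r: "0 < r" "r\<^sup>2 = x\<^sup>2 + y\<^sup>2"
      using that by (simp_all add: r_def add_nonneg_pos)
    with that have "(x / r)\<^sup>2 + (y / r)\<^sup>2 = 1"
      by (simp add: power_divide add_divide_distrib [symmetric])
    then have "0 \<le> Q (x / r) (y / r)"
      using circle that r unfolding Q_def by (metis divide_eq_0_iff less_irrefl)
    also have "Q (x / r) (y / r) = Q x y / r\<^sup>2"
      using r(1) unfolding Q_def by (simp add: field_simps power2_eq_square)
    finally show ?thesis using r(1) by (simp add: zero_le_divide_iff)
  qed
  have "0 \<le> Q x y" for x y
  proof -
    have "((\<lambda>t. Q x t) \<longlongrightarrow> Q x 0) (at 0)"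
      unfolding Q_def by (intro tendsto_intros)
    moreover have "\<forall>\<^sub>F t in at 0. 0 \<le> Q x t"
      using off_axis by (auto simp: eventually_at_filter)
    ultimately have "0 \<le> Q x 0"
      by (rule tendsto_lowerbound) simp
    then show ?thesis using off_axis by (cases "y = 0") auto
  qed
  then show "0 \<le> a \<and> 0 \<le> e \<and> b\<^sup>2 \<le> a * e"
    unfolding Q_def binary_quadratic_form_nonneg_iff [symmetric] by blast
qed (simp add: binary_quadratic_form_nonneg_iff [symmetric])

lemma unit_vector_orthogonal_decomposition:
  fixes z w e :: "'a::real_inner"
  assumes z: "norm z = 1" and w: "norm w = 1" and e: "norm e = 1" "inner e z = 0"
  obtains c s v where "c\<^sup>2 + s\<^sup>2 = 1" "norm v = 1" "inner v z = 0" "w = c *\<^sub>R z + s *\<^sub>R v"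
proof -
  define c where "c = inner w z"
  define u where "u = w - c *\<^sub>R z"
  have u_orth: "inner u z = 0"
    using z by (simp add: u_def c_def inner_diff_left power2_norm_eq_inner [symmetric])
  have "1 = (norm (c *\<^sub>R z + u))\<^sup>2"
    using w by (simp add: u_def)
  also have "\<dots> = c\<^sup>2 + (norm u)\<^sup>2"
    using u_orth z by (simp add: norm_add_Pythagorean orthogonal_def inner_commute power_mult_distrib)
  finally have pyth: "c\<^sup>2 + (norm u)\<^sup>2 = 1" ..
  show thesis
  proof (cases "u = 0")
    case True
    with pyth e show thesis
      by (intro that [of c 0 e]) (simp_all add: u_def)
  next
    case False
    with pyth u_orth show thesis
      by (intro that [of c "norm u" "sgn u"]) (simp_all add: u_def norm_sgn sgn_div_norm)
  qed
qed

lemma csphere_iff_norm_eq_1: "z \<in> csphere \<longleftrightarrow> norm z = 1"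
  by (simp add: csphere_def norm_vec_def L2_set_def)

lemma tangent_iff_inner_eq_0: "v \<in> tangent z \<longleftrightarrow> inner v z = 0"
  by (simp add: tangent_def cinner_def Re_sum inner_vec_def inner_complex_def)

lemma csphere_decomposition:
  assumes "z \<in> csphere" "w \<in> csphere"
  obtains c s v where "c\<^sup>2 + s\<^sup>2 = 1" "v \<in> tangent z \<inter> csphere" "w = c *\<^sub>R z + s *\<^sub>R v"
proof -
  \<comment> \<open>a unit tangent vector at \<open>z\<close>, needed as \<open>v\<close> when \<open>w = \<plusminus>z\<close>\<close>
  define e where "e = (\<chi> k. \<i> * z $ k)"
  have "norm e = 1"
    using assms(1) by (simp add: csphere_iff_norm_eq_1 [symmetric] csphere_def e_def norm_mult)
  moreover have "inner e z = 0"
    by (simp add: e_def inner_vec_def inner_complex_def)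
  ultimately obtain c s v where "c\<^sup>2 + s\<^sup>2 = 1" "norm v = 1" "inner v z = 0" "w = c *\<^sub>R z + s *\<^sub>R v"
    using assms unit_vector_orthogonal_decomposition [of z w e] by (auto simp: csphere_iff_norm_eq_1)
  then show thesis
    by (intro that) (simp_all add: csphere_iff_norm_eq_1 tangent_iff_inner_eq_0)
qed

lemma scaleR_add_in_csphere:
  assumes "z \<in> csphere" "v \<in> tangent z \<inter> csphere" "c\<^sup>2 + s\<^sup>2 = 1"
  shows "c *\<^sub>R z + s *\<^sub>R v \<in> csphere"
proof -
  have "inner (c *\<^sub>R z) (s *\<^sub>R v) = 0"
    using assms(2) by (simp add: tangent_iff_inner_eq_0 inner_commute)
  then have "(norm (c *\<^sub>R z + s *\<^sub>R v))\<^sup>2 = c\<^sup>2 + s\<^sup>2"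
    using assms by (simp add: norm_add_Pythagorean orthogonal_def csphere_iff_norm_eq_1 power_mult_distrib)
  with assms(3) show ?thesis
    by (simp add: csphere_iff_norm_eq_1 norm_eq_1 power2_norm_eq_inner)
qed

lemma cmod_scaleR_add_power2:
  "(cmod (of_real c * x + of_real s * y))\<^sup>2
     = c\<^sup>2 * (cmod x)\<^sup>2 + s\<^sup>2 * (cmod y)\<^sup>2 + 2 * c * s * Re (cnj x * y)"
proof -
  have "(cmod (of_real c * x + of_real s * y))\<^sup>2 = (c * Re x + s * Re y)\<^sup>2 + (c * Im x + s * Im y)\<^sup>2"
    by (simp add: cmod_power2)
  also have "\<dots> = c\<^sup>2 * (cmod x)\<^sup>2 + s\<^sup>2 * (cmod y)\<^sup>2 + 2 * c * s * Re (cnj x * y)"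
    unfolding cmod_power2 by (simp add: power2_eq_square algebra_simps)
  finally show ?thesis .
qed

lemma vec_scaleR_add_nth:
  fixes z v :: "complex ^ 'n"
  shows "(c *\<^sub>R z + s *\<^sub>R v) $ k = of_real c * z $ k + of_real s * v $ k"
  by (simp add: scaleR_conv_of_real [where 'a = complex])

lemma qform_add_left: "qform M (x + y) w = qform M x w + qform M y w"
  by (simp add: qform_def algebra_simps sum.distrib)

lemma qform_add_right: "qform M w (x + y) = qform M w x + qform M w y"
  by (simp add: qform_def algebra_simps sum.distrib)

lemma qform_scaleR_left: "qform M (c *\<^sub>R x) w = of_real c * qform M x w"
  by (simp add: qform_def scaleR_conv_of_real [where 'a = complex] algebra_simps sum_distrib_left)

lemma qform_scaleR_right: "qform M w (c *\<^sub>R x) = of_real c * qform M w x"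
  by (simp add: qform_def scaleR_conv_of_real [where 'a = complex] algebra_simps sum_distrib_left)

lemma qform_eq_sum_row: "qform M x u = (\<Sum>i\<in>UNIV. cnj (x $ i) * (\<Sum>j\<in>UNIV. M $ i $ j * u $ j))"
  by (simp add: qform_def sum_distrib_left mult.assoc)

lemma qform_hermitian_swap:
  assumes "hermitian A"
  shows "qform A w v = cnj (qform A v w)"
proof -
  have "cnj (qform A v w) = (\<Sum>i\<in>UNIV. \<Sum>j\<in>UNIV. v $ i * cnj (A $ i $ j) * cnj (w $ j))"
    by (simp add: qform_def cnj_sum)
  also have "\<dots> = (\<Sum>j\<in>UNIV. \<Sum>i\<in>UNIV. v $ i * cnj (A $ i $ j) * cnj (w $ j))"
    by (rule sum.swap)
  also have "\<dots> = qform A w v"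
  proof -
    have "cnj (A $ i $ j) = A $ j $ i" for i j
      using assms unfolding hermitian_def by metis
    then show ?thesis
      unfolding qform_def by (simp add: mult_ac)
  qed
  finally show ?thesis ..
qed

lemma Re_qform_scaleR_add:
  assumes "hermitian A"
  shows "Re (qform A (c *\<^sub>R z + s *\<^sub>R v) (c *\<^sub>R z + s *\<^sub>R v))
     = c\<^sup>2 * Re (qform A z z) + s\<^sup>2 * Re (qform A v v) + 2 * c * s * Re (qform A v z)"
proof -
  have "qform A (c *\<^sub>R z + s *\<^sub>R v) (c *\<^sub>R z + s *\<^sub>R v)
      = of_real (c * c) * qform A z z + of_real (c * s) * (qform A z v + qform A v z)
        + of_real (s * s) * qform A v v"
    unfolding qform_add_left qform_add_right qform_scaleR_left qform_scaleR_right of_real_mult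
    by (simp only: algebra_simps)
  moreover have "Re (qform A z v) = Re (qform A v z)"
    using qform_hermitian_swap [OF assms, of z v] by simp
  ultimately show ?thesis
    by (simp add: power2_eq_square)
qed

lemma Amod_row:
  "(\<Sum>j\<in>UNIV. Amod A \<beta> z $ i $ j * u $ j)
     = (\<Sum>j\<in>UNIV. A $ i $ j * u $ j) + of_real (2 * \<beta> * (cmod (z $ i))\<^sup>2) * u $ i"
proof -
  have "(\<Sum>j\<in>UNIV. Amod A \<beta> z $ i $ j * u $ j)
      = (\<Sum>j\<in>UNIV. A $ i $ j * u $ j + (if i = j then of_real (2 * \<beta> * (cmod (z $ i))\<^sup>2) * u $ j else 0))"
    unfolding Amod_def by (intro sum.cong refl) (simp add: distrib_right)
  then show ?thesis
    by (simp add: sum.distrib)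
qed

lemma Re_qform_Amod:
  "Re (qform (Amod A \<beta> z) v v)
     = Re (qform A v v) + 2 * \<beta> * (\<Sum>k\<in>UNIV. (cmod (z $ k))\<^sup>2 * (cmod (v $ k))\<^sup>2)"
proof -
  have "qform (Amod A \<beta> z) v v
      = qform A v v + (\<Sum>i\<in>UNIV. of_real (2 * \<beta> * (cmod (z $ i))\<^sup>2) * (cnj (v $ i) * v $ i))"
    unfolding qform_eq_sum_row [of "Amod A \<beta> z"] qform_eq_sum_row [of A] Amod_row
    by (simp add: distrib_left sum.distrib mult.left_commute)
  moreover have "Re (cnj (v $ i) * v $ i) = (cmod (v $ i))\<^sup>2" for i
    unfolding cmod_power2 by (simp add: power2_eq_square)
  ultimately show ?thesis
    by (simp add: Re_sum mult.assoc sum_distrib_left)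
qed

lemma stationary_Re_qform_tangent:
  assumes "stationary A \<beta> z" "v \<in> tangent z"
  shows "Re (qform A v z) = - 2 * \<beta> * (\<Sum>k\<in>UNIV. (cmod (z $ k))\<^sup>2 * Re (cnj (z $ k) * v $ k))"
proof -
  have row: "(\<Sum>j\<in>UNIV. A $ i $ j * z $ j)
      = of_real (2 * lam A \<beta> z - 2 * \<beta> * (cmod (z $ i))\<^sup>2) * z $ i" for i
    using assms(1) Amod_row [of A \<beta> z i z] unfolding stationary_def by (simp add: algebra_simps)
  have "Re (qform A v z)
      = (\<Sum>i\<in>UNIV. (2 * lam A \<beta> z - 2 * \<beta> * (cmod (z $ i))\<^sup>2) * Re (cnj (v $ i) * z $ i))"
    unfolding qform_eq_sum_row row Re_sum by (intro sum.cong refl) (simp add: algebra_simps)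
  also have "\<dots> = 2 * lam A \<beta> z * Re (cinner v z)
      - 2 * \<beta> * (\<Sum>k\<in>UNIV. (cmod (z $ k))\<^sup>2 * Re (cnj (z $ k) * v $ k))"
    unfolding cinner_def Re_sum sum_distrib_left sum_subtractf [symmetric]
    by (intro sum.cong refl) (simp add: algebra_simps)
  finally show ?thesis
    using assms(2) by (simp add: tangent_def)
qed

lemma norm4_4_eq_sum_power2: "norm4_4 z = (\<Sum>k\<in>UNIV. ((cmod (z $ k))\<^sup>2)\<^sup>2)"
  by (simp add: norm4_4_def flip: power_mult)

lemma norm4_4_scaleR_add:
  "norm4_4 (c *\<^sub>R z + s *\<^sub>R v) = (\<Sum>k\<in>UNIV.
     (c\<^sup>2 * (cmod (z $ k))\<^sup>2 + s\<^sup>2 * (cmod (v $ k))\<^sup>2 + 2 * c * s * Re (cnj (z $ k) * v $ k))\<^sup>2)"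
  unfolding norm4_4_eq_sum_power2 vec_scaleR_add_nth cmod_scaleR_add_power2 ..

lemma Hf_csphere:
  assumes "v \<in> csphere"
  shows "Hf A \<beta> z v = Re (qform A v v) - Re (qform A z z) + 2 * \<beta> * (\<Sum>k\<in>UNIV.
     (cmod (z $ k))\<^sup>2 * (cmod (v $ k))\<^sup>2 - ((cmod (z $ k))\<^sup>2)\<^sup>2 + 2 * (Re (cnj (z $ k) * v $ k))\<^sup>2)"
proof -
  have "(\<Sum>k\<in>UNIV. (Re (v $ k * cnj (z $ k)))\<^sup>2) = (\<Sum>k\<in>UNIV. (Re (cnj (z $ k) * v $ k))\<^sup>2)"
    by (simp add: mult.commute)
  then show ?thesis
    using assms
    by (simp add: Hf_def Re_qform_Amod lam_def norm4_4_eq_sum_power2 csphere_def sum.distrib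
        sum_subtractf sum_distrib_left algebra_simps)
qed

lemma H4_eq_fobj_diff_minus_Hf:
  assumes "v \<in> csphere"
  shows "H4 \<beta> z v = 2 * (fobj A \<beta> v - fobj A \<beta> z) - Hf A \<beta> z v"
  using assms
  by (simp add: H4_def Hf_csphere fobj_def norm4_4_eq_sum_power2 power2_diff sum.distrib
      sum_subtractf sum_distrib_left algebra_simps)

lemma fobj_scaleR_add_tangent:
  assumes herm: "hermitian A" and stat: "stationary A \<beta> z"
    and v: "v \<in> tangent z \<inter> csphere" and cs: "c\<^sup>2 + s\<^sup>2 = 1"
  shows "fobj A \<beta> (c *\<^sub>R z + s *\<^sub>R v) - fobj A \<beta> z
     = s\<^sup>2 / 2 * (c\<^sup>2 * Hf A \<beta> z v + 4 * c * s * H3 \<beta> z v + 2 * s\<^sup>2 * (fobj A \<beta> v - fobj A \<beta> z))"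
proof -
  define a where "a k = (cmod (z $ k))\<^sup>2" for k
  define b where "b k = (cmod (v $ k))\<^sup>2" for k
  define r where "r k = Re (cnj (z $ k) * v $ k)" for k
  define Saa where "Saa = (\<Sum>k\<in>UNIV. a k * a k)"
  define Sbb where "Sbb = (\<Sum>k\<in>UNIV. b k * b k)"
  define Sab where "Sab = (\<Sum>k\<in>UNIV. a k * b k)"
  define Srr where "Srr = (\<Sum>k\<in>UNIV. r k * r k)"
  define Sar where "Sar = (\<Sum>k\<in>UNIV. a k * r k)"
  define Sbr where "Sbr = (\<Sum>k\<in>UNIV. b k * r k)"
  define Qz where "Qz = Re (qform A z z)"
  define Qv where "Qv = Re (qform A v v)"
  note sums = Saa_def Sbb_def Sab_def Srr_def Sar_def Sbr_def
  have fz: "fobj A \<beta> z = Qz / 2 + \<beta> / 2 * Saa"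
    by (simp add: fobj_def norm4_4_eq_sum_power2 Qz_def Saa_def a_def power2_eq_square)
  have fv: "fobj A \<beta> v = Qv / 2 + \<beta> / 2 * Sbb"
    by (simp add: fobj_def norm4_4_eq_sum_power2 Qv_def Sbb_def b_def power2_eq_square)
  have "norm4_4 (c *\<^sub>R z + s *\<^sub>R v) = (\<Sum>k\<in>UNIV. (c\<^sup>2 * a k + s\<^sup>2 * b k + 2 * c * s * r k)\<^sup>2)"
    unfolding norm4_4_scaleR_add a_def b_def r_def ..
  also have "\<dots> = (\<Sum>k\<in>UNIV. c^4 * (a k * a k) + s^4 * (b k * b k)
      + 4 * c\<^sup>2 * s\<^sup>2 * (r k * r k) + 2 * c\<^sup>2 * s\<^sup>2 * (a k * b k)
      + 4 * c^3 * s * (a k * r k) + 4 * c * s^3 * (b k * r k))"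
    by (intro sum.cong refl) (simp add: power2_eq_square power3_eq_cube power4_eq_xxxx algebra_simps)
  also have "\<dots> = c^4 * Saa + s^4 * Sbb + 4 * c\<^sup>2 * s\<^sup>2 * Srr
      + 2 * c\<^sup>2 * s\<^sup>2 * Sab + 4 * c^3 * s * Sar + 4 * c * s^3 * Sbr"
    unfolding sums by (simp add: sum.distrib sum_distrib_left)
  finally have norm4: "norm4_4 (c *\<^sub>R z + s *\<^sub>R v) = c^4 * Saa + s^4 * Sbb
      + 4 * c\<^sup>2 * s\<^sup>2 * Srr + 2 * c\<^sup>2 * s\<^sup>2 * Sab + 4 * c^3 * s * Sar + 4 * c * s^3 * Sbr" .
  have "Re (qform A v z) = - 2 * \<beta> * Sar"
    using stationary_Re_qform_tangent [OF stat, of v] v unfolding Sar_def a_def r_def by simp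
  then have fw: "fobj A \<beta> (c *\<^sub>R z + s *\<^sub>R v) = (c\<^sup>2 * Qz + s\<^sup>2 * Qv - 4 * c * s * \<beta> * Sar) / 2
      + \<beta> / 2 * (c^4 * Saa + s^4 * Sbb + 4 * c\<^sup>2 * s\<^sup>2 * Srr + 2 * c\<^sup>2 * s\<^sup>2 * Sab
        + 4 * c^3 * s * Sar + 4 * c * s^3 * Sbr)"
    unfolding fobj_def norm4 Re_qform_scaleR_add [OF herm] Qz_def Qv_def by simp
  have Hf: "Hf A \<beta> z v = Qv - Qz + 2 * \<beta> * (Sab - Saa + 2 * Srr)"
    using v by (simp add: Hf_csphere Qz_def Qv_def sums a_def b_def r_def power2_eq_square
        sum.distrib sum_subtractf sum_distrib_left)
  have H3: "H3 \<beta> z v = \<beta> * (Sbr - Sar)"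
    by (simp add: H3_def sums a_def b_def r_def left_diff_distrib sum_subtractf)
  show ?thesis
    unfolding fw fz fv Hf H3 using cs by algebra
qed

lemma global_min_on_sphere_iff_tangent_forms_nonneg:
  assumes herm: "hermitian A" and stat: "stationary A \<beta> z"
  shows "global_min_on_sphere A \<beta> z \<longleftrightarrow> (\<forall>v \<in> tangent z \<inter> csphere. \<forall>c s. c\<^sup>2 + s\<^sup>2 = 1 \<longrightarrow> s \<noteq> 0 \<longrightarrow>
      0 \<le> c\<^sup>2 * Hf A \<beta> z v + 4 * c * s * H3 \<beta> z v + 2 * s\<^sup>2 * (fobj A \<beta> v - fobj A \<beta> z))"
proof -
  have z: "z \<in> csphere"
    using stat by (simp add: stationary_def)
  have "global_min_on_sphere A \<beta> z \<longleftrightarrow> (\<forall>v \<in> tangent z \<inter> csphere. \<forall>c s. c\<^sup>2 + s\<^sup>2 = 1 \<longrightarrow>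
      0 \<le> fobj A \<beta> (c *\<^sub>R z + s *\<^sub>R v) - fobj A \<beta> z)"
    (is "_ \<longleftrightarrow> ?along_circles")
  proof
    assume "global_min_on_sphere A \<beta> z"
    then show ?along_circles
      using scaleR_add_in_csphere [OF z] by (simp add: global_min_on_sphere_def)
  next
    assume ?along_circles
    then show "global_min_on_sphere A \<beta> z"
      using z by (auto simp: global_min_on_sphere_def elim: csphere_decomposition [OF z])
  qed
  also have "\<dots> \<longleftrightarrow> (\<forall>v \<in> tangent z \<inter> csphere. \<forall>c s. c\<^sup>2 + s\<^sup>2 = 1 \<longrightarrow> s \<noteq> 0 \<longrightarrow>
      0 \<le> c\<^sup>2 * Hf A \<beta> z v + 4 * c * s * H3 \<beta> z v + 2 * s\<^sup>2 * (fobj A \<beta> v - fobj A \<beta> z))"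
  proof -
    have "0 \<le> s\<^sup>2 / 2 * q \<longleftrightarrow> (s \<noteq> 0 \<longrightarrow> 0 \<le> q)" for s q :: real
      by (cases "s = 0") (simp_all add: zero_le_mult_iff)
    then show ?thesis
      by (simp add: fobj_scaleR_add_tangent [OF herm stat])
  qed
  finally show ?thesis .
qed

lemma global_min_on_sphere_iff_tangent_psd:
  assumes "hermitian A" and "stationary A \<beta> z"
  shows "global_min_on_sphere A \<beta> z \<longleftrightarrow> (\<forall>v \<in> tangent z \<inter> csphere.
      0 \<le> Hf A \<beta> z v \<and> 0 \<le> fobj A \<beta> v - fobj A \<beta> z
      \<and> 2 * (H3 \<beta> z v)\<^sup>2 \<le> Hf A \<beta> z v * (fobj A \<beta> v - fobj A \<beta> z))"
proof -
  have form: "c\<^sup>2 * h + 4 * c * s * t + 2 * s\<^sup>2 * d = h * c\<^sup>2 + 2 * (2 * t) * c * s + (2 * d) * s\<^sup>2"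
    for h t d c s :: real
    by (simp add: algebra_simps)
  have scale: "0 \<le> 2 * d \<longleftrightarrow> 0 \<le> d" "(2 * t)\<^sup>2 \<le> h * (2 * d) \<longleftrightarrow> 2 * t\<^sup>2 \<le> h * d"
    for h t d :: real
    by (simp_all add: power_mult_distrib mult.commute)
  show ?thesis
    unfolding global_min_on_sphere_iff_tangent_forms_nonneg [OF assms] form
      binary_quadratic_form_nonneg_on_circle_iff scale ..
qed

theorem theorem3:
  fixes A :: "complex ^ 'n ^ 'n" and \<beta> :: real and z :: "complex ^ 'n"
  assumes "hermitian A" and "\<beta> > 0" and "stationary A \<beta> z"
  shows "global_min_on_sphere A \<beta> z \<longleftrightarrow>
    ((\<forall>v \<in> tangent z \<inter> csphere.
        Hf A \<beta> z v \<ge> 0 \<and>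
        2 * (H3 \<beta> z v)\<^sup>2 \<le> Hf A \<beta> z v * (fobj A \<beta> v - fobj A \<beta> z)) \<and>
     (\<forall>v \<in> tangent z \<inter> csphere. Hf A \<beta> z v = 0 \<longrightarrow>
        H3 \<beta> z v = 0 \<and> H4 \<beta> z v \<ge> 0))"
proof -
  have criterion: "(0 \<le> h \<and> 0 \<le> d \<and> 2 * t\<^sup>2 \<le> h * d)
      \<longleftrightarrow> (0 \<le> h \<and> 2 * t\<^sup>2 \<le> h * d) \<and> (h = 0 \<longrightarrow> t = 0 \<and> 0 \<le> 2 * d - h)"
    for h t d :: real
  proof (cases "h = 0")
    case False
    have "0 \<le> d" if "0 \<le> h" "2 * t\<^sup>2 \<le> h * d"
    proof -
      have "0 \<le> h * d"
        using that(2) zero_le_power2 [of t] by linarith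
      with that(1) False show ?thesis
        by (simp add: zero_le_mult_iff)
    qed
    with False show ?thesis
      by blast
  qed auto
  have "global_min_on_sphere A \<beta> z \<longleftrightarrow> (\<forall>v \<in> tangent z \<inter> csphere.
      (0 \<le> Hf A \<beta> z v \<and> 2 * (H3 \<beta> z v)\<^sup>2 \<le> Hf A \<beta> z v * (fobj A \<beta> v - fobj A \<beta> z))
      \<and> (Hf A \<beta> z v = 0 \<longrightarrow> H3 \<beta> z v = 0 \<and> 0 \<le> H4 \<beta> z v))"
    unfolding global_min_on_sphere_iff_tangent_psd [OF assms(1,3)]
    by (intro ball_cong refl)
      (simp only: criterion, simp add: H4_eq_fobj_diff_minus_Hf [where A = A])
  then show ?thesis
    by (simp only: ball_conj_distrib)
qed

end
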